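(* Let $\mathcal N_3$ be a simple 3-level network and let $\mathcal N_2$ be the simple 2-level network associated to it. Let $\mathcal U_3$ and $\mathcal U_2$ be the sets of edges incident with the sources of $\mathcal N_3$ and $\mathcal N_2$, respectively, and let $\mathbf A_{\mathcal N_3},\mathbf A_{\mathcal N_2}$ be adversaries able to corrupt up to $t$ edges of $\mathcal U_3$ and of $\mathcal U_2$, respectively. Then for every alphabet $\mathcal A$ and every positive integer $i$, \[C_i(\mathcal N_3,\mathcal A,\mathbf A_{\mathcal N_3})\le C_i(\mathcal N_2,\mathcal A,\mathbf A_{\mathcal N_2}).\]
   Context: An alphabet is a finite set $\mathcal A$ with $|\mathcal A|\ge2$. A simple 3-level network is a directed acyclic multigraph with a source $S$, a single terminal $T$, and intermediate nodes partitioned into $L_1,L_2$, such that every edge goes from $S$ to $L_1$, from $L_1$ to $L_2$, or from $L_2$ to $T$ (so every $S$–$T$ path has length 3), and every intermediate node lies on some $S$–$T$ path. Let $G^{3,2}$ be the (undirected) graph on $L_1\cup L_2$ whose edges are the edges of $\mathcal N_3$ between $L_1$ and $L_2$, with connected components $K_1,\dots,K_n$. The associated simple 2-level network $\mathcal N_2$ has source $S$, intermediate nodes $V_1,\dots,V_n$ (one per component), terminal $T$, $a_j$ parallel edges $S\to V_j$ and $b_j$ parallel edges $V_j\to T$, where $a_j$ (resp. $b_j$) is the number of edges of $\mathcal N_3$ from $S$ into $K_j$ (resp. from $K_j$ to $T$). In a network each edge carries one symbol of $\mathcal A$; a network code assigns to each intermediate node $V$ a function $\mathcal A^{\deg^-(V)}\to\mathcal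 A^{\deg^+(V)}$ mapping the symbols on its incoming edges to those on its outgoing edges. In one use, the source sends $x\in\mathcal A^{\deg^+(S)}$, the adversary may replace symbols on up to $t$ edges of the given vulnerable set by arbitrary symbols, and values propagate via the network code; the fan-out set $\Omega(x)$ is the set of all vectors the terminal can receive. For $i$ uses with the same network code, the fan-out set of $(x^1,\dots,x^i)$ is $\Omega(x^1)\times\dots\times\Omega(x^i)$. A nonempty code $C\subseteq(\mathcal A^{\deg^+(S)})^i$ is unambiguous if distinct codewords have disjoint fan-out sets, and $C_i$ is the maximum of $\log_{|\mathcal A|}(|C|)/i$ over network codes and unambiguous codes. *)

theory Defs
  imports Complex_Main "HOL-Library.Multiset"
begin

definition vecs :: "'a set \<Rightarrow> nat \<Rightarrow> 'a list set" where
  "vecs A m = {x. length x = m \<and> set x \<subseteq> A}"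

definition hamming :: "'a list \<Rightarrow> 'a list \<Rightarrow> nat" where
  "hamming x y = card {j. j < length x \<and> x ! j \<noteq> y ! j}"

text \<open>A layer of a layered network: incoming edges (into this layer's nodes) are
  described by the list hin of their head nodes, outgoing edges by the list tout
  of their tail nodes. A layer map assigns to every intermediate node of the layer
  a function from the symbols on its incoming edges to the symbols on its outgoing
  edges; globally this is a map F : A^|hin| -> A^|tout| whose value on an outgoing
  edge e only depends on the incoming edges of the tail node of e.\<close>
definition layer_map ::
  "'a set \<Rightarrow> nat list \<Rightarrow> nat list \<Rightarrow> ('a list \<Rightarrow> 'a list) \<Rightarrow> bool" where
  "layer_map A hin tout F \<longleftrightarrow>
     (\<forall>x \<in> vecs A (length hin). F x \<in> vecs A (length tout)) \<and>
     (\<forall>x \<in> vecs A (length hin). \<forall>y \<in> vecs A (length hin). \<forall>e < length tout.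
        (\<forall>j < length hin. hin ! j = tout ! e \<longrightarrow> x ! j = y ! j) \<longrightarrow> F x ! e = F y ! e)"

text \<open>Adversary corrupting up to t of the source edges (all m edges leaving S);
  Phi is the global transfer map of a network code.\<close>
definition fanout :: "'a set \<Rightarrow> nat \<Rightarrow> nat \<Rightarrow> ('a list \<Rightarrow> 'b) \<Rightarrow> 'a list \<Rightarrow> 'b set" where
  "fanout A m t Phi x = {Phi y | y. y \<in> vecs A m \<and> hamming x y \<le> t}"

definition fanout_uses ::
  "'a set \<Rightarrow> nat \<Rightarrow> nat \<Rightarrow> ('a list \<Rightarrow> 'b) \<Rightarrow> 'a list list \<Rightarrow> 'b list set" where
  "fanout_uses A m t Phi xs =
     {zs. length zs = length xs \<and> (\<forall>k < length xs. zs ! k \<in> fanout A m t Phi (xs ! k))}"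

definition unambiguous ::
  "'a set \<Rightarrow> nat \<Rightarrow> nat \<Rightarrow> ('a list \<Rightarrow> 'b) \<Rightarrow> nat \<Rightarrow> 'a list list set \<Rightarrow> bool" where
  "unambiguous A m t Phi i C \<longleftrightarrow>
     C \<noteq> {} \<and>
     C \<subseteq> {xs. length xs = i \<and> (\<forall>k < i. xs ! k \<in> vecs A m)} \<and>
     (\<forall>xs \<in> C. \<forall>ys \<in> C. xs \<noteq> ys \<longrightarrow>
        fanout_uses A m t Phi xs \<inter> fanout_uses A m t Phi ys = {})"

definition capacity ::
  "'a set \<Rightarrow> nat \<Rightarrow> nat \<Rightarrow> ('a list \<Rightarrow> 'b) set \<Rightarrow> nat \<Rightarrow> real" where
  "capacity A m t Codes i =
     Max {log (real (card A)) (real (card C)) / real i | Phi C.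
            Phi \<in> Codes \<and> unambiguous A m t Phi i C}"

text \<open>L1 = {0..<n1}, L2 = {0..<n2}. s3 lists the source edges by their head in L1,
  m3 lists the L1->L2 edges as (tail, head), t3 lists the edges into T by their
  tail in L2 (multigraph: repeated entries are parallel edges).\<close>
definition simple3 :: "nat \<Rightarrow> nat \<Rightarrow> nat list \<Rightarrow> (nat \<times> nat) list \<Rightarrow> nat list \<Rightarrow> bool" where
  "simple3 n1 n2 s3 m3 t3 \<longleftrightarrow>
     (\<forall>v \<in> set s3. v < n1) \<and> (\<forall>(v, w) \<in> set m3. v < n1 \<and> w < n2) \<and>
     (\<forall>w \<in> set t3. w < n2) \<and>
     (\<forall>v < n1. \<exists>w. v \<in> set s3 \<and> (v, w) \<in> set m3 \<and> w \<in> set t3) \<and>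
     (\<forall>w < n2. \<exists>v. v \<in> set s3 \<and> (v, w) \<in> set m3 \<and> w \<in> set t3)"

definition codes3 :: "'a set \<Rightarrow> nat list \<Rightarrow> (nat \<times> nat) list \<Rightarrow> nat list \<Rightarrow> ('a list \<Rightarrow> 'a list) set" where
  "codes3 A s3 m3 t3 = {F2 \<circ> F1 | F1 F2.
      layer_map A s3 (map fst m3) F1 \<and> layer_map A (map snd m3) t3 F2}"

text \<open>Simple 2-level network: intermediate nodes {0..<n}; s2 lists source edges by head,
  t2 lists terminal edges by tail.\<close>
definition codes2 :: "'a set \<Rightarrow> nat list \<Rightarrow> nat list \<Rightarrow> ('a list \<Rightarrow> 'a list) set" where
  "codes2 A s2 t2 = {F. layer_map A s2 t2 F}"

text \<open>The graph G^{3,2} on L1 + L2 (Inl = L1, Inr = L2).\<close>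
definition G32_adj :: "(nat \<times> nat) list \<Rightarrow> (nat + nat) \<Rightarrow> (nat + nat) \<Rightarrow> bool" where
  "G32_adj m3 u u' \<longleftrightarrow> (\<exists>(v, w) \<in> set m3. (u = Inl v \<and> u' = Inr w) \<or> (u = Inr w \<and> u' = Inl v))"

definition G32_conn :: "(nat \<times> nat) list \<Rightarrow> (nat + nat) \<Rightarrow> (nat + nat) \<Rightarrow> bool" where
  "G32_conn m3 = (G32_adj m3)\<^sup>*\<^sup>*"

definition G32_vertices :: "nat \<Rightarrow> nat \<Rightarrow> (nat + nat) set" where
  "G32_vertices n1 n2 = Inl ` {0..<n1} \<union> Inr ` {0..<n2}"

text \<open>(n, s2, t2) is the simple 2-level network associated to the 3-level network:
  some labelling c of the vertices of G^{3,2} by {0..<n} identifies the connected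
  components K_1..K_n with V_0..V_{n-1}; V_j has exactly a_j incoming edges from S
  (a_j = number of source edges into K_j) and b_j outgoing edges to T.\<close>
definition assoc2 ::
  "nat \<Rightarrow> nat \<Rightarrow> nat list \<Rightarrow> (nat \<times> nat) list \<Rightarrow> nat list \<Rightarrow> nat \<Rightarrow> nat list \<Rightarrow> nat list \<Rightarrow> bool" where
  "assoc2 n1 n2 s3 m3 t3 n s2 t2 \<longleftrightarrow>
     (\<exists>c :: nat + nat \<Rightarrow> nat.
        c ` G32_vertices n1 n2 = {0..<n} \<and>
        (\<forall>u \<in> G32_vertices n1 n2. \<forall>u' \<in> G32_vertices n1 n2. c u = c u' \<longleftrightarrow> G32_conn m3 u u') \<and>
        mset s2 = mset (map (\<lambda>v. c (Inl v)) s3) \<and>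
        mset t2 = mset (map (\<lambda>w. c (Inr w)) t3))"

end

theory Submission
  imports Defs "HOL-Combinatorics.Permutations"
begin

text \<open>The node V_j of the 2-level network can simulate the whole component K_j:
  an output of a 3-level code on an edge leaving K_j depends only on the source symbols entering
  K_j, so the composite transfer map, read with every edge labelled by its component, is a
  network code of the 2-level network up to the order of the source and terminal edges.
  Reordering the source edges preserves Hamming distance, hence the power of the adversary, and
  reordering the terminal edges is invertible, so every unambiguous code of the 3-level network
  yields an unambiguous code of the same size for the 2-level network.\<close>

lemma vecs_permute_list:
  assumes "\<sigma> permutes {..<m}" and "x \<in> vecs A m"
  shows "permute_list \<sigma> x \<in> vecs A m"
  using assms by (simp add: vecs_def)

lemma permute_list_inv_cancel:
  assumes "\<sigma> permutes {..<length x}"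
  shows "permute_list \<sigma> (permute_list (inv \<sigma>) x) = x"
    and "permute_list (inv \<sigma>) (permute_list \<sigma> x) = x"
proof -
  have inv: "inv \<sigma> permutes {..<length x}"
    using assms by (rule permutes_inv)
  show "permute_list \<sigma> (permute_list (inv \<sigma>) x) = x"
    using permute_list_compose[OF assms, of "inv \<sigma>"] permutes_inv_o(2)[OF assms] by simp
  show "permute_list (inv \<sigma>) (permute_list \<sigma> x) = x"
    using permute_list_compose[OF inv, of \<sigma>] permutes_inv_o(1)[OF assms] by simp
qed

lemma hamming_permute_list:
  assumes "\<sigma> permutes {..<length x}" and "length y = length x"
  shows "hamming (permute_list \<sigma> x) (permute_list \<sigma> y) = hamming x y"
proof -
  let ?D = "{k. k < length x \<and> x ! k \<noteq> y ! k}"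
  have in_range: "\<sigma> j < length x \<longleftrightarrow> j < length x" for j
    using permutes_in_image[OF assms(1)] by simp
  have "{j. j < length x \<and> permute_list \<sigma> x ! j \<noteq> permute_list \<sigma> y ! j} = \<sigma> -` ?D"
    using assms by (auto simp: permute_list_nth in_range)
  moreover have "card (\<sigma> -` ?D) = card ?D"
    using assms(1) by (intro card_vimage_inj) (auto simp: permutes_inj permutes_surj)
  ultimately show ?thesis
    by (simp add: hamming_def)
qed

lemma layer_mapI:
  assumes "\<And>x. x \<in> vecs A (length hin) \<Longrightarrow> F x \<in> vecs A (length tout)"
    and "\<And>x y e. x \<in> vecs A (length hin) \<Longrightarrow> y \<in> vecs A (length hin) \<Longrightarrow>
           e < length tout \<Longrightarrow> (\<And>j. j < length hin \<Longrightarrow> hin ! j = tout ! e \<Longrightarrow> x ! j = y ! j) \<Longrightarrow>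
           F x ! e = F y ! e"
  shows "layer_map A hin tout F"
  using assms unfolding layer_map_def by blast

lemma layer_map_vecs:
  "layer_map A hin tout F \<Longrightarrow> x \<in> vecs A (length hin) \<Longrightarrow> F x \<in> vecs A (length tout)"
  unfolding layer_map_def by blast

lemma layer_map_local:
  assumes "layer_map A hin tout F"
    and "x \<in> vecs A (length hin)" and "y \<in> vecs A (length hin)" and "e < length tout"
    and "\<And>j. j < length hin \<Longrightarrow> hin ! j = tout ! e \<Longrightarrow> x ! j = y ! j"
  shows "F x ! e = F y ! e"
  using assms unfolding layer_map_def by blast

lemma layer_map_const:
  assumes "a \<in> A"
  shows "layer_map A hin tout (\<lambda>x. replicate (length tout) a)"
  using assms by (auto simp: layer_map_def vecs_def)

lemma layer_map_relabel:
  assumes "layer_map A hin tout F"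
  shows "layer_map A (map f hin) (map f tout) F"
proof (rule layer_mapI)
  fix x assume "x \<in> vecs A (length (map f hin))"
  then show "F x \<in> vecs A (length (map f tout))"
    using assms by (simp add: layer_map_vecs)
next
  fix x y e
  assume "x \<in> vecs A (length (map f hin))" "y \<in> vecs A (length (map f hin))"
    and "e < length (map f tout)"
    and agree: "\<And>j. j < length (map f hin) \<Longrightarrow> map f hin ! j = map f tout ! e \<Longrightarrow> x ! j = y ! j"
  then show "F x ! e = F y ! e"
    by (intro layer_map_local[OF assms]) (simp_all add: agree)
qed

lemma layer_map_comp:
  assumes F: "layer_map A hin mid F" and G: "layer_map A mid tout G"
  shows "layer_map A hin tout (G \<circ> F)"
proof (rule layer_mapI)
  fix x assume "x \<in> vecs A (length hin)"
  then show "(G \<circ> F) x \<in> vecs A (length tout)"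
    using F G by (simp add: layer_map_vecs)
next
  fix x y e
  assume x: "x \<in> vecs A (length hin)" and y: "y \<in> vecs A (length hin)"
    and e: "e < length tout"
    and agree: "\<And>j. j < length hin \<Longrightarrow> hin ! j = tout ! e \<Longrightarrow> x ! j = y ! j"
  have "F x ! k = F y ! k" if "k < length mid" "mid ! k = tout ! e" for k
    by (rule layer_map_local[OF F x y]) (use that agree in auto)
  then show "(G \<circ> F) x ! e = (G \<circ> F) y ! e"
    using e by (simp, intro layer_map_local[OF G]) (simp_all add: layer_map_vecs[OF F] x y)
qed

lemma layer_map_permute:
  assumes F: "layer_map A hin tout F"
    and \<sigma>: "\<sigma> permutes {..<length hin}" and \<tau>: "\<tau> permutes {..<length tout}"
  shows "layer_map A (permute_list \<sigma> hin) (permute_list \<tau> tout)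
           (\<lambda>y. permute_list \<tau> (F (permute_list (inv \<sigma>) y)))"
proof (rule layer_mapI)
  have \<sigma>': "inv \<sigma> permutes {..<length hin}"
    using \<sigma> by (rule permutes_inv)
  have \<sigma>'_range: "inv \<sigma> k < length hin \<longleftrightarrow> k < length hin" for k
    using permutes_in_image[OF \<sigma>'] by simp
  have \<tau>_range: "\<tau> e < length tout \<longleftrightarrow> e < length tout" for e
    using permutes_in_image[OF \<tau>] by simp
  {
    fix y assume "y \<in> vecs A (length (permute_list \<sigma> hin))"
    then have "permute_list (inv \<sigma>) y \<in> vecs A (length hin)"
      using \<sigma>' by (simp add: vecs_permute_list)
    then show "permute_list \<tau> (F (permute_list (inv \<sigma>) y)) \<in> vecs A (length (permute_list \<tau> tout))"
      using F \<tau> by (simp add: layer_map_vecs vecs_permute_list)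
  }
  fix y y' e
  assume y: "y \<in> vecs A (length (permute_list \<sigma> hin))"
    and y': "y' \<in> vecs A (length (permute_list \<sigma> hin))"
    and e: "e < length (permute_list \<tau> tout)"
    and agree: "\<And>j. j < length (permute_list \<sigma> hin) \<Longrightarrow>
                  permute_list \<sigma> hin ! j = permute_list \<tau> tout ! e \<Longrightarrow> y ! j = y' ! j"
  let ?x = "permute_list (inv \<sigma>) y" and ?x' = "permute_list (inv \<sigma>) y'"
  have x: "?x \<in> vecs A (length hin)" "?x' \<in> vecs A (length hin)"
    using y y' \<sigma>' by (simp_all add: vecs_permute_list)
  \<comment> \<open>position j of y carries the symbol of edge \<open>\<sigma> j\<close> of hin\<close>
  have "?x ! k = ?x' ! k" if k: "k < length hin" "hin ! k = tout ! \<tau> e" for k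
  proof -
    have "permute_list \<sigma> hin ! inv \<sigma> k = permute_list \<tau> tout ! e"
      using \<sigma> \<tau> e k by (simp add: permute_list_nth \<sigma>'_range permutes_inverses(1)[OF \<sigma>])
    then have "y ! inv \<sigma> k = y' ! inv \<sigma> k"
      using agree k(1) by (simp add: \<sigma>'_range)
    then show ?thesis
      using y y' \<sigma>' k(1) by (simp add: permute_list_nth vecs_def)
  qed
  then have "F ?x ! \<tau> e = F ?x' ! \<tau> e"
    using e by (intro layer_map_local[OF F x]) (simp_all add: \<tau>_range)
  moreover have "length (F ?x) = length tout" "length (F ?x') = length tout"
    using layer_map_vecs[OF F x(1)] layer_map_vecs[OF F x(2)] by (simp_all add: vecs_def)
  ultimately show "permute_list \<tau> (F ?x) ! e = permute_list \<tau> (F ?x') ! e"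
    using \<tau> e by (simp add: permute_list_nth)
qed

lemma hamming_self [simp]: "hamming x x = 0"
  by (simp add: hamming_def)

lemma finite_vecs: "finite A \<Longrightarrow> finite (vecs A m)"
  using finite_lists_length_eq[of A m] by (simp add: vecs_def conj_commute)

lemma finite_codeword_lists:
  assumes "finite A"
  shows "finite {xs. length xs = i \<and> (\<forall>k < i. xs ! k \<in> vecs A m)}"
proof (rule finite_subset)
  show "{xs. length xs = i \<and> (\<forall>k < i. xs ! k \<in> vecs A m)} \<subseteq> {xs. set xs \<subseteq> vecs A m \<and> length xs = i}"
    by (auto simp: in_set_conv_nth)
  show "finite {xs. set xs \<subseteq> vecs A m \<and> length xs = i}"
    using assms by (intro finite_lists_length_eq finite_vecs)
qed

lemma unambiguous_singleton:
  assumes "length xs = i" and "set xs \<subseteq> vecs A m"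
  shows "unambiguous A m t \<Phi> i {xs}"
  using assms by (auto simp: unambiguous_def)

lemma unambiguous_transfer:
  assumes U: "unambiguous A m t \<Phi> i C"
    and P: "\<And>x. x \<in> vecs A m \<Longrightarrow> P x \<in> vecs A m'"
    and sim: "\<And>x z. x \<in> vecs A m \<Longrightarrow> z \<in> fanout A m' t \<Psi> (P x) \<Longrightarrow> R z \<in> fanout A m t \<Phi> x"
  shows "unambiguous A m' t \<Psi> i (map P ` C)" and "card (map P ` C) = card C"
proof -
  have codeword: "length xs = i" "\<And>k. k < i \<Longrightarrow> xs ! k \<in> vecs A m" if "xs \<in> C" for xs
    using U that by (auto simp: unambiguous_def)
  have pull: "map R zs \<in> fanout_uses A m t \<Phi> xs"
    if "xs \<in> C" "zs \<in> fanout_uses A m' t \<Psi> (map P xs)" for xs zs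
    using that codeword[OF that(1)] by (auto simp: fanout_uses_def intro!: sim)
  have separated: "xs = ys" if "xs \<in> C" "ys \<in> C"
    and "zs \<in> fanout_uses A m' t \<Psi> (map P xs)" "zs \<in> fanout_uses A m' t \<Psi> (map P ys)" for xs ys zs
    using U that pull unfolding unambiguous_def by blast
  have received: "map (\<Psi> \<circ> P) xs \<in> fanout_uses A m' t \<Psi> (map P xs)" if "xs \<in> C" for xs
    using codeword[OF that] P by (force simp: fanout_uses_def fanout_def)
  \<comment> \<open>injectivity of map P is forced by unambiguity alone\<close>
  have "inj_on (map P) C"
    by (rule inj_onI) (metis received separated)
  then show "card (map P ` C) = card C"
    by (rule card_image)
  show "unambiguous A m' t \<Psi> i (map P ` C)"
    unfolding unambiguous_def
  proof (intro conjI ballI impI)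
    show "map P ` C \<noteq> {}"
      using U by (simp add: unambiguous_def)
    show "map P ` C \<subseteq> {xs. length xs = i \<and> (\<forall>k < i. xs ! k \<in> vecs A m')}"
      using codeword P by auto
    show "fanout_uses A m' t \<Psi> xs' \<inter> fanout_uses A m' t \<Psi> ys' = {}"
      if "xs' \<in> map P ` C" "ys' \<in> map P ` C" "xs' \<noteq> ys'" for xs' ys'
      using that separated by blast
  qed
qed

lemma unambiguous_permute:
  assumes U: "unambiguous A m t \<Phi> i C"
    and \<sigma>: "\<sigma> permutes {..<m}" and \<tau>: "\<tau> permutes {..<r}"
    and len: "\<And>x. x \<in> vecs A m \<Longrightarrow> length (\<Phi> x) = r"
  shows "unambiguous A m t (\<lambda>y. permute_list \<tau> (\<Phi> (permute_list (inv \<sigma>) y))) i (map (permute_list \<sigma>) ` C)"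
    and "card (map (permute_list \<sigma>) ` C) = card C"
proof -
  let ?\<Psi> = "\<lambda>y. permute_list \<tau> (\<Phi> (permute_list (inv \<sigma>) y))"
  have received: "permute_list (inv \<tau>) z \<in> fanout A m t \<Phi> x"
    if x: "x \<in> vecs A m" and z: "z \<in> fanout A m t ?\<Psi> (permute_list \<sigma> x)" for x z
  proof -
    obtain y' where y': "y' \<in> vecs A m" "hamming (permute_list \<sigma> x) y' \<le> t" "z = ?\<Psi> y'"
      using z unfolding fanout_def by blast
    define y where "y = permute_list (inv \<sigma>) y'"
    have y: "y \<in> vecs A m"
      unfolding y_def by (rule vecs_permute_list[OF permutes_inv[OF \<sigma>] y'(1)])
    have "length y' = m" "length x = m" "length y = m"
      using x y y'(1) by (simp_all add: vecs_def)
    then have "hamming x y = hamming (permute_list \<sigma> x) (permute_list \<sigma> y)"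
      using \<sigma> by (simp add: hamming_permute_list)
    also have "permute_list \<sigma> y = y'"
      unfolding y_def using \<sigma> \<open>length y' = m\<close> by (simp add: permute_list_inv_cancel)
    finally have "hamming x y = hamming (permute_list \<sigma> x) y'" .
    moreover have "permute_list (inv \<tau>) z = \<Phi> y"
      unfolding y'(3) y_def[symmetric] using len[OF y] \<tau> by (simp add: permute_list_inv_cancel)
    ultimately show ?thesis
      using y y' unfolding fanout_def by auto
  qed
  show "unambiguous A m t ?\<Psi> i (map (permute_list \<sigma>) ` C)"
    by (rule unambiguous_transfer(1)[where R = "permute_list (inv \<tau>)", OF U])
      (simp_all add: vecs_permute_list[OF \<sigma>] received)
  show "card (map (permute_list \<sigma>) ` C) = card C"
    by (rule unambiguous_transfer(2)[where R = "permute_list (inv \<tau>)" and \<Psi> = ?\<Psi> and m' = m, OF U])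
      (simp_all add: vecs_permute_list[OF \<sigma>] received)
qed

lemma layer_map_reorder_edges:
  assumes F: "layer_map A hin tout F" and U: "unambiguous A (length hin) t F i C"
    and hin: "mset hin' = mset hin" and tout: "mset tout' = mset tout"
  shows "\<exists>G. layer_map A hin' tout' G \<and> (\<exists>C'. unambiguous A (length hin') t G i C' \<and> card C' = card C)"
proof -
  obtain \<sigma> where \<sigma>: "\<sigma> permutes {..<length hin}" "permute_list \<sigma> hin = hin'"
    using mset_eq_permutation[OF hin] by blast
  obtain \<tau> where \<tau>: "\<tau> permutes {..<length tout}" "permute_list \<tau> tout = tout'"
    using mset_eq_permutation[OF tout] by blast
  have "length (F x) = length tout" if "x \<in> vecs A (length hin)" for x
    using layer_map_vecs[OF F that] by (simp add: vecs_def)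
  from unambiguous_permute[OF U \<sigma>(1) \<tau>(1) this]
  have "unambiguous A (length hin') t (\<lambda>y. permute_list \<tau> (F (permute_list (inv \<sigma>) y))) i
      (map (permute_list \<sigma>) ` C) \<and> card (map (permute_list \<sigma>) ` C) = card C"
    using \<sigma>(2) by auto
  moreover have "layer_map A hin' tout' (\<lambda>y. permute_list \<tau> (F (permute_list (inv \<sigma>) y)))"
    using layer_map_permute[OF F \<sigma>(1) \<tau>(1)] \<sigma>(2) \<tau>(2) by simp
  ultimately show ?thesis
    by blast
qed

lemma capacity_le_capacity:
  assumes "finite A" and "A \<noteq> {}" and "Codes \<noteq> {}"
    and sim: "\<And>\<Phi> C. \<Phi> \<in> Codes \<Longrightarrow> unambiguous A m t \<Phi> i C \<Longrightarrow>
               \<exists>\<Psi> \<in> Codes'. \<exists>C'. unambiguous A m' t \<Psi> i C' \<and> card C' = card C"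
  shows "capacity A m t Codes i \<le> capacity A m' t Codes' i"
proof -
  define rate where "rate C = log (real (card A)) (real (card C)) / real i" for C :: "'a list list set"
  define S where "S = {rate C | \<Phi> C. \<Phi> \<in> Codes \<and> unambiguous A m t \<Phi> i C}"
  define S' where "S' = {rate C | \<Psi> C. \<Psi> \<in> Codes' \<and> unambiguous A m' t \<Psi> i C}"
  have "S \<subseteq> S'"
  proof
    fix r assume "r \<in> S"
    then obtain \<Phi> C where "r = rate C" "\<Phi> \<in> Codes" "unambiguous A m t \<Phi> i C"
      unfolding S_def by blast
    moreover from sim[OF this(2,3)] obtain \<Psi> C' where
      "\<Psi> \<in> Codes'" "unambiguous A m' t \<Psi> i C'" "card C' = card C"
      by blast
    ultimately show "r \<in> S'"
      unfolding S'_def rate_def by (metis (mono_tags, lifting) mem_Collect_eq)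
  qed
  moreover have "S \<noteq> {}"
  proof -
    obtain \<Phi> a where "\<Phi> \<in> Codes" "a \<in> A"
      using assms(2,3) by blast
    then have "rate {replicate i (replicate m a)} \<in> S"
      unfolding S_def by (force intro: unambiguous_singleton simp: vecs_def)
    then show ?thesis by blast
  qed
  moreover have "finite S'"
  proof (rule finite_subset)
    show "S' \<subseteq> rate ` Pow {xs. length xs = i \<and> (\<forall>k < i. xs ! k \<in> vecs A m')}"
      unfolding S'_def unambiguous_def by blast
    show "finite (rate ` Pow {xs. length xs = i \<and> (\<forall>k < i. xs ! k \<in> vecs A m')})"
      using assms(1) by (simp add: finite_codeword_lists)
  qed
  ultimately have "Max S \<le> Max S'"
    by (rule Max_mono)
  then show ?thesis
    unfolding capacity_def S_def S'_def rate_def .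
qed

lemma component_label_edge:
  assumes label: "\<forall>u \<in> G32_vertices n1 n2. \<forall>u' \<in> G32_vertices n1 n2. c u = c u' \<longleftrightarrow> G32_conn m3 u u'"
    and edge: "(v, w) \<in> set m3" and "v < n1" and "w < n2"
  shows "c (Inl v) = c (Inr w)"
proof -
  have "G32_conn m3 (Inl v) (Inr w)"
    unfolding G32_conn_def using edge by (intro r_into_rtranclp) (auto simp: G32_adj_def)
  moreover have "Inl v \<in> G32_vertices n1 n2" "Inr w \<in> G32_vertices n1 n2"
    using \<open>v < n1\<close> \<open>w < n2\<close> by (auto simp: G32_vertices_def)
  ultimately show ?thesis
    using label by blast
qed

lemma codes3_layer_map_merged:
  assumes "\<Phi> \<in> codes3 A s3 m3 t3" and edges: "\<forall>(v, w) \<in> set m3. c (Inl v) = c (Inr w)"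
  shows "layer_map A (map (\<lambda>v. c (Inl v)) s3) (map (\<lambda>w. c (Inr w)) t3) \<Phi>"
proof -
  obtain F1 F2 where \<Phi>: "\<Phi> = F2 \<circ> F1"
    and F1: "layer_map A s3 (map fst m3) F1" and F2: "layer_map A (map snd m3) t3 F2"
    using assms(1) unfolding codes3_def by blast
  have "map (\<lambda>v. c (Inl v)) (map fst m3) = map (\<lambda>w. c (Inr w)) (map snd m3)"
    using edges by auto
  then have "layer_map A (map (\<lambda>v. c (Inl v)) s3) (map (\<lambda>w. c (Inr w)) (map snd m3)) F1"
    using layer_map_relabel[OF F1] by metis
  then show ?thesis
    unfolding \<Phi> using layer_map_relabel[OF F2] by (rule layer_map_comp)
qed

lemma codes3_nonempty:
  assumes "A \<noteq> {}"
  shows "codes3 A s3 m3 t3 \<noteq> {}"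
proof -
  obtain a where "a \<in> A"
    using assms by blast
  then have "(\<lambda>x. replicate (length t3) a) \<circ> (\<lambda>x. replicate (length (map fst m3)) a) \<in> codes3 A s3 m3 t3"
    unfolding codes3_def by (blast intro: layer_map_const)
  then show ?thesis
    by blast
qed

theorem mainTheorem5:
  fixes A :: "'a set" and n1 n2 n t i :: nat
    and s3 t3 s2 t2 :: "nat list" and m3 :: "(nat \<times> nat) list"
  assumes "finite A" and "card A \<ge> 2"
    and "simple3 n1 n2 s3 m3 t3"
    and "assoc2 n1 n2 s3 m3 t3 n s2 t2"
    and "i > 0"
  shows "capacity A (length s3) t (codes3 A s3 m3 t3) i
           \<le> capacity A (length s2) t (codes2 A s2 t2) i"
proof -
  obtain c :: "nat + nat \<Rightarrow> nat" where
    label: "\<forall>u \<in> G32_vertices n1 n2. \<forall>u' \<in> G32_vertices n1 n2. c u = c u' \<longleftrightarrow> G32_conn m3 u u'"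
    and s2: "mset s2 = mset (map (\<lambda>v. c (Inl v)) s3)"
    and t2: "mset t2 = mset (map (\<lambda>w. c (Inr w)) t3)"
    using assms(4) unfolding assoc2_def by blast
  have edges: "\<forall>(v, w) \<in> set m3. c (Inl v) = c (Inr w)"
    using assms(3) component_label_edge[OF label] unfolding simple3_def by blast
  have "A \<noteq> {}"
    using assms(2) by auto
  show ?thesis
  proof (rule capacity_le_capacity[OF assms(1) \<open>A \<noteq> {}\<close> codes3_nonempty[OF \<open>A \<noteq> {}\<close>]])
    fix \<Phi> C
    assume \<Phi>: "\<Phi> \<in> codes3 A s3 m3 t3" and U: "unambiguous A (length s3) t \<Phi> i C"
    have "layer_map A (map (\<lambda>v. c (Inl v)) s3) (map (\<lambda>w. c (Inr w)) t3) \<Phi>"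
      using \<Phi> edges by (rule codes3_layer_map_merged)
    moreover have "unambiguous A (length (map (\<lambda>v. c (Inl v)) s3)) t \<Phi> i C"
      using U by simp
    ultimately show "\<exists>\<Psi> \<in> codes2 A s2 t2. \<exists>C'. unambiguous A (length s2) t \<Psi> i C' \<and> card C' = card C"
      using layer_map_reorder_edges[OF _ _ s2 t2] unfolding codes2_def by blast
  qed
qed

end
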